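(* Let $P$ be the transition matrix of a reversible and ergodic Markov chain on $V$ with stationary distribution $\pi$ and mixing rate $t^*$. For the billiard router model for $P$, with any initial configuration, $$\left|\chi^{(T)}_w-\mu^{(T)}_w\right|\le\frac{6\pi_w}{\pi_{\min}}\,t^*\,(\Delta-1)$$ for all $w\in V$ and $T\ge0$.
   Context: Let $V=\{1,\dots,N\}$ and let $P\in\mathbb{R}_{\ge 0}^{N\times N}$ be an ergodic (irreducible, aperiodic) stochastic matrix with stationary distribution $\pi$; $\pi_{\min}=\min_v\pi_v$; reversible means $\pi_uP_{u,v}=\pi_vP_{v,u}$ for all $u,v$. For $v\in V$ let $\mathcal N(v)=\{u: P_{v,u}>0\}$, $\delta(v)=|\mathcal N(v)|$, $\Delta=\max_v\delta(v)$. Total variation distance $d_{TV}(\xi,\zeta)=\frac12\|\xi-\zeta\|_1$; mixing time $\tau(\varepsilon)=\max_{v}\min\{t\ge0: d_{TV}(P^t_{v,\cdot},\pi)\le\varepsilon\}$; mixing rate $t^*=\tau(1/4)$. A functional-router model consists of functions $\sigma_v:\mathbb{Z}_{\ge0}\to\mathcal N(v)$; write $I_{v,u}[z,z')=|\{j\in\{z,\dots,z'-1\}:\sigma_v(j)=u\}|$ (zero if $z'\le z$). Given $\chi^{(0)}\in\mathbb{Z}_{\ge0}^N$, set $Z^{(t)}_{v,u}=I_{v,u}\big[\sum_{s=0}^{t-1}\chi^{(s)}_v,\sum_{s=0}^{t}\chi^{(s)}_v\big)$, $\chi^{(t+1)}_u=\sum_vZ^{(t)}_{v,u}$, $\mu^{(0)}=\chi^{(0)}$,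 $\mu^{(t)}=\mu^{(0)}P^t$. The billiard router is defined recursively: $\sigma_v(i)$ is an element $u\in\mathcal N(v)$ minimizing $(I_{v,u}[0,i)+1)/P_{v,u}$ (ties broken arbitrarily). It is known (billiard sequences) that for this router $|I_{v,u}[z,z')-(z'-z)P_{v,u}|\le 1+(\delta(v)-2)P_{v,u}$ for all $v,u$ and $z'>z\ge0$. *)

theory Defs
  imports Complex_Main
begin

fun mpow :: "('v::finite \<Rightarrow> 'v \<Rightarrow> real) \<Rightarrow> nat \<Rightarrow> 'v \<Rightarrow> 'v \<Rightarrow> real" where
  "mpow P 0 = (\<lambda>u w. if u = w then 1 else 0)"
| "mpow P (Suc t) = (\<lambda>u w. \<Sum>v\<in>UNIV. mpow P t u v * P v w)"

definition stochastic :: "('v::finite \<Rightarrow> 'v \<Rightarrow> real) \<Rightarrow> bool" where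
  "stochastic P \<longleftrightarrow> (\<forall>u v. P u v \<ge> 0) \<and> (\<forall>u. (\<Sum>v\<in>UNIV. P u v) = 1)"

definition irreducible_chain :: "('v::finite \<Rightarrow> 'v \<Rightarrow> real) \<Rightarrow> bool" where
  "irreducible_chain P \<longleftrightarrow> (\<forall>u v. \<exists>t. mpow P t u v > 0)"

definition aperiodic_chain :: "('v::finite \<Rightarrow> 'v \<Rightarrow> real) \<Rightarrow> bool" where
  "aperiodic_chain P \<longleftrightarrow> (\<forall>v. Gcd {t::nat. t \<ge> 1 \<and> mpow P t v v > 0} = 1)"

definition ergodic :: "('v::finite \<Rightarrow> 'v \<Rightarrow> real) \<Rightarrow> bool" where
  "ergodic P \<longleftrightarrow> stochastic P \<and> irreducible_chain P \<and> aperiodic_chain P"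

definition stationary :: "('v::finite \<Rightarrow> 'v \<Rightarrow> real) \<Rightarrow> ('v \<Rightarrow> real) \<Rightarrow> bool" where
  "stationary P \<pi> \<longleftrightarrow> (\<forall>v. \<pi> v \<ge> 0) \<and> (\<Sum>v\<in>UNIV. \<pi> v) = 1
      \<and> (\<forall>w. (\<Sum>v\<in>UNIV. \<pi> v * P v w) = \<pi> w)"

definition reversible :: "('v::finite \<Rightarrow> 'v \<Rightarrow> real) \<Rightarrow> ('v \<Rightarrow> real) \<Rightarrow> bool" where
  "reversible P \<pi> \<longleftrightarrow> (\<forall>u v. \<pi> u * P u v = \<pi> v * P v u)"

definition pi_min :: "('v::finite \<Rightarrow> real) \<Rightarrow> real" where
  "pi_min \<pi> = Min (range \<pi>)"

definition dTV :: "('v::finite \<Rightarrow> real) \<Rightarrow> ('v \<Rightarrow> real) \<Rightarrow> real" where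
  "dTV \<xi> \<zeta> = (1/2) * (\<Sum>v\<in>UNIV. \<bar>\<xi> v - \<zeta> v\<bar>)"

definition mixing_time :: "('v::finite \<Rightarrow> 'v \<Rightarrow> real) \<Rightarrow> ('v \<Rightarrow> real) \<Rightarrow> real \<Rightarrow> nat" where
  "mixing_time P \<pi> \<epsilon> = Max (range (\<lambda>v. LEAST t. dTV (mpow P t v) \<pi> \<le> \<epsilon>))"

definition mixing_rate :: "('v::finite \<Rightarrow> 'v \<Rightarrow> real) \<Rightarrow> ('v \<Rightarrow> real) \<Rightarrow> nat" where
  "mixing_rate P \<pi> = mixing_time P \<pi> (1/4)"

definition nbhd :: "('v::finite \<Rightarrow> 'v \<Rightarrow> real) \<Rightarrow> 'v \<Rightarrow> 'v set" where
  "nbhd P v = {u. P v u > 0}"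

definition max_degree :: "('v::finite \<Rightarrow> 'v \<Rightarrow> real) \<Rightarrow> nat" where
  "max_degree P = Max (range (\<lambda>v. card (nbhd P v)))"

definition Icnt :: "('v \<Rightarrow> nat \<Rightarrow> 'v) \<Rightarrow> 'v \<Rightarrow> 'v \<Rightarrow> nat \<Rightarrow> nat \<Rightarrow> nat" where
  "Icnt \<sigma> v u z z' = card {j. z \<le> j \<and> j < z' \<and> \<sigma> v j = u}"

definition functional_router :: "('v::finite \<Rightarrow> 'v \<Rightarrow> real) \<Rightarrow> ('v \<Rightarrow> nat \<Rightarrow> 'v) \<Rightarrow> bool" where
  "functional_router P \<sigma> \<longleftrightarrow> (\<forall>v i. \<sigma> v i \<in> nbhd P v)"

definition billiard_router :: "('v::finite \<Rightarrow> 'v \<Rightarrow> real) \<Rightarrow> ('v \<Rightarrow> nat \<Rightarrow> 'v) \<Rightarrow> bool" where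
  "billiard_router P \<sigma> \<longleftrightarrow> functional_router P \<sigma> \<and>
     (\<forall>v i u. u \<in> nbhd P v \<longrightarrow>
        (real (Icnt \<sigma> v (\<sigma> v i) 0 i) + 1) / P v (\<sigma> v i) \<le> (real (Icnt \<sigma> v u 0 i) + 1) / P v u)"

text \<open>router_state sigma chi0 t = (chi^(t), v \<mapsto> sum_{s<t} chi^(s)_v).\<close>
fun router_state :: "('v::finite \<Rightarrow> nat \<Rightarrow> 'v) \<Rightarrow> ('v \<Rightarrow> nat) \<Rightarrow> nat \<Rightarrow> ('v \<Rightarrow> nat) \<times> ('v \<Rightarrow> nat)" where
  "router_state \<sigma> \<chi>0 0 = (\<chi>0, \<lambda>_. 0)"
| "router_state \<sigma> \<chi>0 (Suc t) =
     (let (c, S) = router_state \<sigma> \<chi>0 t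
      in (\<lambda>u. \<Sum>v\<in>UNIV. Icnt \<sigma> v u (S v) (S v + c v), \<lambda>v. S v + c v))"

definition chi :: "('v::finite \<Rightarrow> nat \<Rightarrow> 'v) \<Rightarrow> ('v \<Rightarrow> nat) \<Rightarrow> nat \<Rightarrow> 'v \<Rightarrow> nat" where
  "chi \<sigma> \<chi>0 t = fst (router_state \<sigma> \<chi>0 t)"

definition mu :: "('v::finite \<Rightarrow> 'v \<Rightarrow> real) \<Rightarrow> ('v \<Rightarrow> nat) \<Rightarrow> nat \<Rightarrow> 'v \<Rightarrow> real" where
  "mu P \<chi>0 t w = (\<Sum>v\<in>UNIV. real (\<chi>0 v) * mpow P t v w)"

end

theory Submission
  imports Defs
begin

text \<open>The router satisfies \<open>\<chi>\<^sup>(\<^sup>t\<^sup>+\<^sup>1\<^sup>) = \<chi>\<^sup>(\<^sup>t\<^sup>) P + E\<^sup>(\<^sup>t\<^sup>)\<close>, where the inflow error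
  \<open>E\<^sup>(\<^sup>t\<^sup>)\<^sub>u = \<Sum>\<^sub>v (Z\<^sup>(\<^sup>t\<^sup>)\<^sub>v\<^sub>,\<^sub>u - \<chi>\<^sup>(\<^sup>t\<^sup>)\<^sub>v P\<^sub>v\<^sub>,\<^sub>u)\<close> sums to zero; hence
  \<open>\<chi>\<^sup>(\<^sup>T\<^sup>) - \<mu>\<^sup>(\<^sup>T\<^sup>) = \<Sum>\<^sub>s\<^sub><\<^sub>T E\<^sup>(\<^sup>s\<^sup>) P\<^sup>T\<^sup>-\<^sup>1\<^sup>-\<^sup>s\<close>. The billiard discrepancy bound together with detailed
  balance gives \<open>|E\<^sup>(\<^sup>s\<^sup>)\<^sub>u| \<le> 2 (\<Delta> - 1) \<pi>\<^sub>u / \<pi>\<^sub>m\<^sub>i\<^sub>n\<close>, and reversibility rewrites the \<open>w\<close>-entry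
  of \<open>E P\<^sup>k\<close> as a sum weighted by \<open>P\<^sup>k\<^sub>w\<^sub>,\<^sub>u - \<pi>\<^sub>u\<close>; so step \<open>s\<close> contributes at most
  \<open>4 (\<Delta> - 1) (\<pi>\<^sub>w / \<pi>\<^sub>m\<^sub>i\<^sub>n) d\<^sub>T\<^sub>V(P\<^sup>k\<^sub>w, \<pi>)\<close> with \<open>k = T - 1 - s\<close>. The distance is at most \<open>1/4\<close> from
  time \<open>t\<^sup>*\<close> on and halves every \<open>t\<^sup>*\<close> steps, so these distances sum to at most \<open>3 t\<^sup>* / 2\<close>.\<close>

section \<open>Powers of a stochastic matrix\<close>

lemma mpow_add: "mpow P (a + b) u w = (\<Sum>y\<in>UNIV. mpow P a u y * mpow P b y w)"
proof (induction b arbitrary: w)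
  case 0
  then show ?case by (simp add: if_distrib cong: if_cong)
next
  case (Suc b)
  have "mpow P (a + Suc b) u w = (\<Sum>z\<in>UNIV. \<Sum>y\<in>UNIV. mpow P a u y * mpow P b y z * P z w)"
    by (simp add: Suc sum_distrib_right)
  also have "\<dots> = (\<Sum>y\<in>UNIV. \<Sum>z\<in>UNIV. mpow P a u y * mpow P b y z * P z w)"
    by (rule sum.swap)
  also have "\<dots> = (\<Sum>y\<in>UNIV. mpow P a u y * mpow P (Suc b) y w)"
    by (simp add: sum_distrib_left mult.assoc)
  finally show ?case .
qed

lemma mpow_1: "mpow P 1 u w = P u w"
proof -
  have "(\<Sum>v\<in>UNIV. (if u = v then 1 else 0) * P v w) = (\<Sum>v\<in>UNIV. if u = v then P v w else 0)"
    by (rule sum.cong) auto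
  then show ?thesis by simp
qed

lemma mpow_Suc_left: "mpow P (Suc t) u w = (\<Sum>y\<in>UNIV. P u y * mpow P t y w)"
  using mpow_add[of P 1 t u w] by (simp only: mpow_1 plus_1_eq_Suc)

lemma mpow_nonneg:
  assumes "stochastic P"
  shows "0 \<le> mpow P t u w"
proof (induction t arbitrary: w)
  case (Suc t)
  then show ?case using assms by (simp add: stochastic_def sum_nonneg)
qed simp

lemma mpow_row_sum:
  assumes "stochastic P"
  shows "(\<Sum>w\<in>UNIV. mpow P t u w) = 1"
proof (induction t)
  case (Suc t)
  have "(\<Sum>w\<in>UNIV. mpow P (Suc t) u w) = (\<Sum>w\<in>UNIV. \<Sum>y\<in>UNIV. mpow P t u y * P y w)"
    by simp
  also have "\<dots> = (\<Sum>y\<in>UNIV. \<Sum>w\<in>UNIV. mpow P t u y * P y w)"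
    by (rule sum.swap)
  also have "\<dots> = (\<Sum>y\<in>UNIV. mpow P t u y)"
    using assms by (simp add: sum_distrib_left[symmetric] stochastic_def)
  finally show ?case using Suc by simp
qed simp

lemma mpow_mult_le:
  assumes "stochastic P"
  shows "mpow P a x y * mpow P b y z \<le> mpow P (a + b) x z"
  unfolding mpow_add
  by (rule member_le_sum[where f = "\<lambda>y. mpow P a x y * mpow P b y z"])
     (auto intro: mult_nonneg_nonneg mpow_nonneg[OF assms])

lemma stationary_mpow:
  assumes "stationary P \<pi>"
  shows "(\<Sum>v\<in>UNIV. \<pi> v * mpow P t v w) = \<pi> w"
proof (induction t arbitrary: w)
  case 0
  show ?case by (simp add: if_distrib cong: if_cong)
next
  case (Suc t)
  have "(\<Sum>v\<in>UNIV. \<pi> v * mpow P (Suc t) v w) = (\<Sum>v\<in>UNIV. \<Sum>y\<in>UNIV. \<pi> v * mpow P t v y * P y w)"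
    by (simp add: sum_distrib_left mult.assoc)
  also have "\<dots> = (\<Sum>y\<in>UNIV. \<Sum>v\<in>UNIV. \<pi> v * mpow P t v y * P y w)"
    by (rule sum.swap)
  also have "\<dots> = (\<Sum>y\<in>UNIV. \<pi> y * P y w)"
    by (simp add: sum_distrib_right[symmetric] Suc)
  finally show ?case using assms by (simp add: stationary_def)
qed

lemma reversible_mpow:
  assumes "reversible P \<pi>"
  shows "\<pi> u * mpow P t u w = \<pi> w * mpow P t w u"
proof (induction t arbitrary: u w)
  case (Suc t)
  have "\<pi> u * mpow P (Suc t) u w = (\<Sum>y\<in>UNIV. (\<pi> u * mpow P t u y) * P y w)"
    by (simp add: sum_distrib_left mult.assoc)
  also have "\<dots> = (\<Sum>y\<in>UNIV. mpow P t y u * (\<pi> y * P y w))"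
    by (simp add: Suc mult.commute mult.left_commute)
  also have "\<dots> = (\<Sum>y\<in>UNIV. mpow P t y u * (\<pi> w * P w y))"
    using assms by (simp add: reversible_def)
  also have "\<dots> = \<pi> w * mpow P (Suc t) w u"
    by (simp only: mpow_Suc_left) (simp add: sum_distrib_left mult.commute mult.left_commute)
  finally show ?case .
qed simp

lemma mpow_minus_stationary:
  assumes "stationary P \<pi>"
  shows "mpow P (s + t) x z - \<pi> z = (\<Sum>y\<in>UNIV. (mpow P s x y - \<pi> y) * mpow P t y z)"
  by (simp add: left_diff_distrib sum_subtractf mpow_add stationary_mpow[OF assms])

lemma sum_mpow_minus_stationary:
  assumes "stationary P \<pi>" "stochastic P"
  shows "(\<Sum>y\<in>UNIV. mpow P s x y - \<pi> y) = 0"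
  using assms by (simp add: sum_subtractf mpow_row_sum stationary_def)

section \<open>Total variation distance to stationarity\<close>

lemma sum_abs_mult_le_Doeblin:
  fixes a :: "'v::finite \<Rightarrow> real" and Q :: "'v \<Rightarrow> 'v \<Rightarrow> real"
  assumes Q_ge: "\<And>y z. c z \<le> Q y z" and Q_rows: "\<And>y. (\<Sum>z\<in>UNIV. Q y z) = 1"
    and a_sum: "(\<Sum>y\<in>UNIV. a y) = 0"
  shows "(\<Sum>z\<in>UNIV. \<bar>\<Sum>y\<in>UNIV. a y * Q y z\<bar>) \<le> (1 - (\<Sum>z\<in>UNIV. c z)) * (\<Sum>y\<in>UNIV. \<bar>a y\<bar>)"
proof -
  have shift: "(\<Sum>y\<in>UNIV. a y * Q y z) = (\<Sum>y\<in>UNIV. a y * (Q y z - c z))" for z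
    using a_sum by (simp add: right_diff_distrib sum_subtractf sum_distrib_right[symmetric])
  have "(\<Sum>z\<in>UNIV. \<bar>\<Sum>y\<in>UNIV. a y * Q y z\<bar>) \<le> (\<Sum>z\<in>UNIV. \<Sum>y\<in>UNIV. \<bar>a y\<bar> * (Q y z - c z))"
  proof (rule sum_mono)
    fix z
    have "\<bar>\<Sum>y\<in>UNIV. a y * (Q y z - c z)\<bar> \<le> (\<Sum>y\<in>UNIV. \<bar>a y * (Q y z - c z)\<bar>)"
      by (rule sum_abs)
    then show "\<bar>\<Sum>y\<in>UNIV. a y * Q y z\<bar> \<le> (\<Sum>y\<in>UNIV. \<bar>a y\<bar> * (Q y z - c z))"
      using Q_ge by (simp add: shift abs_mult)
  qed
  also have "\<dots> = (\<Sum>y\<in>UNIV. \<Sum>z\<in>UNIV. \<bar>a y\<bar> * (Q y z - c z))"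
    by (rule sum.swap)
  also have "\<dots> = (\<Sum>y\<in>UNIV. \<bar>a y\<bar> * (1 - (\<Sum>z\<in>UNIV. c z)))"
    by (simp add: sum_distrib_left[symmetric] sum_subtractf Q_rows)
  finally show ?thesis by (metis mult.commute sum_distrib_right)
qed

lemma sum_abs_mult_le_stochastic:
  fixes a :: "'v::finite \<Rightarrow> real" and Q :: "'v \<Rightarrow> 'v \<Rightarrow> real"
  assumes Q_nonneg: "\<And>y z. 0 \<le> Q y z" and Q_rows: "\<And>y. (\<Sum>z\<in>UNIV. Q y z) = 1"
  shows "(\<Sum>z\<in>UNIV. \<bar>\<Sum>y\<in>UNIV. a y * Q y z\<bar>) \<le> (\<Sum>y\<in>UNIV. \<bar>a y\<bar>)"
proof -
  have "(\<Sum>z\<in>UNIV. \<bar>\<Sum>y\<in>UNIV. a y * Q y z\<bar>) \<le> (\<Sum>z\<in>UNIV. \<Sum>y\<in>UNIV. \<bar>a y\<bar> * Q y z)"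
    by (rule sum_mono, rule order_trans[OF sum_abs]) (simp add: abs_mult Q_nonneg)
  also have "\<dots> = (\<Sum>y\<in>UNIV. \<Sum>z\<in>UNIV. \<bar>a y\<bar> * Q y z)"
    by (rule sum.swap)
  also have "\<dots> = (\<Sum>y\<in>UNIV. \<bar>a y\<bar>)"
    by (simp add: sum_distrib_left[symmetric] Q_rows)
  finally show ?thesis .
qed

lemma dTV_nonneg: "0 \<le> dTV a b"
  unfolding dTV_def by (simp add: sum_nonneg)

lemma dTV_mpow_le_1:
  assumes "stationary P \<pi>" "stochastic P"
  shows "dTV (mpow P t x) \<pi> \<le> 1"
proof -
  have "(\<Sum>v\<in>UNIV. \<bar>mpow P t x v - \<pi> v\<bar>) \<le> (\<Sum>v\<in>UNIV. mpow P t x v + \<pi> v)"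
    using assms mpow_nonneg[OF assms(2)] by (intro sum_mono) (auto simp: stationary_def abs_le_iff)
  also have "\<dots> = 2"
    using assms by (simp add: sum.distrib mpow_row_sum stationary_def)
  finally show ?thesis unfolding dTV_def by simp
qed

lemma dTV_mpow_antimono:
  assumes "stationary P \<pi>" "stochastic P" "t\<^sub>1 \<le> t\<^sub>2"
  shows "dTV (mpow P t\<^sub>2 x) \<pi> \<le> dTV (mpow P t\<^sub>1 x) \<pi>"
proof -
  obtain k where k: "t\<^sub>2 = t\<^sub>1 + k" using assms(3) le_Suc_ex by blast
  have "(\<Sum>z\<in>UNIV. \<bar>mpow P t\<^sub>2 x z - \<pi> z\<bar>)
      = (\<Sum>z\<in>UNIV. \<bar>\<Sum>y\<in>UNIV. (mpow P t\<^sub>1 x y - \<pi> y) * mpow P k y z\<bar>)"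
    unfolding k by (simp add: mpow_minus_stationary[OF assms(1)])
  also have "\<dots> \<le> (\<Sum>y\<in>UNIV. \<bar>mpow P t\<^sub>1 x y - \<pi> y\<bar>)"
    by (rule sum_abs_mult_le_stochastic) (use mpow_nonneg[OF assms(2)] mpow_row_sum[OF assms(2)] in auto)
  finally show ?thesis unfolding dTV_def by simp
qed

text \<open>Subtracting \<open>\<pi>\<close> from every row of \<open>P\<^sup>t\<close> does not change the product with the
  zero-sum vector \<open>P\<^sup>s\<^sub>x - \<pi>\<close>.\<close>
lemma dTV_mpow_add_le:
  assumes "stationary P \<pi>" "stochastic P" and b: "\<And>y. dTV (mpow P t y) \<pi> \<le> b"
  shows "dTV (mpow P (s + t) x) \<pi> \<le> 2 * dTV (mpow P s x) \<pi> * b"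
proof -
  define a where "a y = mpow P s x y - \<pi> y" for y
  have a_sum: "(\<Sum>y\<in>UNIV. a y) = 0"
    unfolding a_def by (rule sum_mpow_minus_stationary[OF assms(1,2)])
  have eq: "mpow P (s + t) x z - \<pi> z = (\<Sum>y\<in>UNIV. a y * (mpow P t y z - \<pi> z))" for z
    using a_sum
    by (simp add: mpow_minus_stationary[OF assms(1)] a_def right_diff_distrib sum_subtractf
        sum_distrib_right[symmetric])
  have "(\<Sum>z\<in>UNIV. \<bar>mpow P (s + t) x z - \<pi> z\<bar>)
      \<le> (\<Sum>z\<in>UNIV. \<Sum>y\<in>UNIV. \<bar>a y\<bar> * \<bar>mpow P t y z - \<pi> z\<bar>)"
    unfolding eq by (rule sum_mono, rule order_trans[OF sum_abs]) (simp add: abs_mult)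
  also have "\<dots> = (\<Sum>y\<in>UNIV. \<Sum>z\<in>UNIV. \<bar>a y\<bar> * \<bar>mpow P t y z - \<pi> z\<bar>)"
    by (rule sum.swap)
  also have "\<dots> = (\<Sum>y\<in>UNIV. \<bar>a y\<bar> * (2 * dTV (mpow P t y) \<pi>))"
    by (simp add: sum_distrib_left dTV_def)
  also have "\<dots> \<le> (\<Sum>y\<in>UNIV. \<bar>a y\<bar> * (2 * b))"
    by (intro sum_mono mult_left_mono) (simp_all add: b)
  also have "\<dots> = 2 * (2 * dTV (mpow P s x) \<pi> * b)"
    unfolding dTV_def a_def by (simp add: sum_distrib_right sum_distrib_left mult_ac)
  finally show ?thesis unfolding dTV_def by simp
qed

section \<open>Ergodic chains mix\<close>

lemma nat_submonoid_mult_mem: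
  fixes M :: "nat set"
  assumes "0 \<in> M" "\<And>a b. a \<in> M \<Longrightarrow> b \<in> M \<Longrightarrow> a + b \<in> M" "a \<in> M"
  shows "k * a \<in> M"
  using assms by (induction k) simp_all

text \<open>The least positive difference \<open>d\<close> of two elements of \<open>M\<close> divides every element of \<open>M\<close>:
  otherwise the remainder of some element modulo \<open>d\<close> would be a smaller positive difference.\<close>
lemma nat_submonoid_Gcd_1_consecutive:
  fixes M :: "nat set"
  assumes zero: "0 \<in> M" and add: "\<And>a b. a \<in> M \<Longrightarrow> b \<in> M \<Longrightarrow> a + b \<in> M"
    and Gcd_M: "Gcd M = 1"
  shows "\<exists>b\<in>M. b + 1 \<in> M"
proof -
  have mult: "k * a \<in> M" if "a \<in> M" for a k
    using zero add that by (rule nat_submonoid_mult_mem)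
  define D where "D = {k. 0 < k \<and> (\<exists>b\<in>M. b + k \<in> M)}"
  have "\<not> M \<subseteq> {0}" using Gcd_M by (metis Gcd_0_iff zero_neq_one)
  then obtain s where "s \<in> M" "0 < s" by blast
  then have "s \<in> D" using zero unfolding D_def by force
  define d where "d = (LEAST k. k \<in> D)"
  have "d \<in> D" unfolding d_def using \<open>s \<in> D\<close> by (rule LeastI)
  then obtain b where b: "b \<in> M" "b + d \<in> M" and d_pos: "0 < d" unfolding D_def by blast
  have "d dvd x" if x: "x \<in> M" for x
  proof (rule ccontr)
    assume "\<not> d dvd x"
    define q r where "q = x div d" and "r = x mod d"
    have "0 < r" "r < d" using \<open>\<not> d dvd x\<close> d_pos unfolding r_def by (auto simp: dvd_eq_mod_eq_0)
    have "x = q * d + r" unfolding q_def r_def by simp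
    then have "q * (b + d) + r = x + q * b" by (simp add: algebra_simps)
    moreover have "x + q * b \<in> M" "q * (b + d) \<in> M" using add[OF x mult[OF b(1)]] mult[OF b(2)] .
    ultimately have "q * (b + d) + r \<in> M" by simp
    then have "r \<in> D" unfolding D_def using \<open>0 < r\<close> \<open>q * (b + d) \<in> M\<close> by blast
    then have "d \<le> r" unfolding d_def by (rule Least_le)
    then show False using \<open>r < d\<close> by simp
  qed
  then have "d dvd Gcd M" by (rule Gcd_greatest)
  then have "d = 1" using Gcd_M by simp
  then show ?thesis using b by blast
qed

lemma nat_submonoid_consecutive_eventually:
  fixes M :: "nat set"
  assumes zero: "0 \<in> M" and add: "\<And>a b. a \<in> M \<Longrightarrow> b \<in> M \<Longrightarrow> a + b \<in> M"
    and b: "b \<in> M" "b + 1 \<in> M" and n: "b * b \<le> n"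
  shows "n \<in> M"
proof -
  have mult: "k * a \<in> M" if "a \<in> M" for a k
    using zero add that by (rule nat_submonoid_mult_mem)
  show ?thesis
  proof (cases "b = 0")
    case True
    then show ?thesis using mult[OF b(2), of n] by simp
  next
    case False
    define q r where "q = n div b" and "r = n mod b"
    have "r < b" using False unfolding r_def by simp
    moreover have "b \<le> q" using n False unfolding q_def
      by (metis div_le_mono nonzero_mult_div_cancel_right)
    moreover have "n = q * b + r" unfolding q_def r_def by simp
    ultimately have "n = (q - r) * b + r * (b + 1)" by (simp add: algebra_simps diff_mult_distrib)
    moreover have "(q - r) * b + r * (b + 1) \<in> M" by (intro add mult b)
    ultimately show ?thesis by simp
  qed
qed

lemma nat_submonoid_Gcd_1_eventually:
  fixes M :: "nat set"
  assumes "0 \<in> M" "\<And>a b. a \<in> M \<Longrightarrow> b \<in> M \<Longrightarrow> a + b \<in> M" "Gcd M = 1"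
  shows "\<exists>n\<^sub>0. \<forall>n\<ge>n\<^sub>0. n \<in> M"
  using nat_submonoid_Gcd_1_consecutive[OF assms] nat_submonoid_consecutive_eventually[OF assms(1,2)]
  by blast

lemma ergodic_mpow_pos:
  assumes "ergodic P"
  shows "\<exists>m. \<forall>x y. 0 < mpow P m x y"
proof -
  have st: "stochastic P" and irr: "irreducible_chain P" and ap: "aperiodic_chain P"
    using assms unfolding ergodic_def by auto
  have "\<exists>n\<^sub>0. \<forall>n\<ge>n\<^sub>0. n \<in> {t. 0 < mpow P t y y}" for y
  proof (rule nat_submonoid_Gcd_1_eventually)
    show "a + b \<in> {t. 0 < mpow P t y y}" if "a \<in> {t. 0 < mpow P t y y}" "b \<in> {t. 0 < mpow P t y y}"
      for a b
    proof -
      have "0 < mpow P a y y * mpow P b y y" using that by simp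
      then show ?thesis using mpow_mult_le[OF st, of a y y b y] by simp
    qed
    have "{t. 0 < mpow P t y y} = insert 0 {t. 1 \<le> t \<and> 0 < mpow P t y y}" by auto
    then show "Gcd {t. 0 < mpow P t y y} = 1"
      using ap unfolding aperiodic_chain_def by simp
  qed simp
  then have "\<forall>y. \<exists>n\<^sub>0. \<forall>n\<ge>n\<^sub>0. 0 < mpow P n y y" by simp
  then obtain n\<^sub>0 where n\<^sub>0: "\<And>y n. n\<^sub>0 y \<le> n \<Longrightarrow> 0 < mpow P n y y" by metis
  obtain t where t: "\<And>x y. 0 < mpow P (t x y) x y"
    using irr unfolding irreducible_chain_def by metis
  define m where "m = (\<Sum>x\<in>UNIV. \<Sum>y\<in>UNIV. t x y) + (\<Sum>y\<in>UNIV. n\<^sub>0 y)"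
  have "0 < mpow P m x y" for x y
  proof -
    have "t x y \<le> (\<Sum>x\<in>UNIV. \<Sum>y\<in>UNIV. t x y)"
      using member_le_sum[of y UNIV "t x"] member_le_sum[of x UNIV "\<lambda>x. \<Sum>y\<in>UNIV. t x y"] by simp
    moreover have "n\<^sub>0 y \<le> (\<Sum>y\<in>UNIV. n\<^sub>0 y)" by (rule member_le_sum) auto
    ultimately have "t x y \<le> m" "n\<^sub>0 y \<le> m - t x y" unfolding m_def by linarith+
    then have "0 < mpow P (t x y) x y * mpow P (m - t x y) y y" using t n\<^sub>0 by simp
    also have "\<dots> \<le> mpow P (t x y + (m - t x y)) x y" by (rule mpow_mult_le[OF st])
    finally show ?thesis using \<open>t x y \<le> m\<close> by simp
  qed
  then show ?thesis by blast
qed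

lemma stationary_pos:
  assumes "ergodic P" "stationary P \<pi>"
  shows "0 < \<pi> v"
proof -
  have st: "stochastic P" and irr: "irreducible_chain P" using assms(1) unfolding ergodic_def by auto
  have \<pi>_nonneg: "\<And>v. 0 \<le> \<pi> v" and "(\<Sum>v\<in>UNIV. \<pi> v) = 1"
    using assms(2) unfolding stationary_def by auto
  then obtain u where "0 < \<pi> u" by (metis not_less sum_nonpos zero_less_one)
  obtain t where "0 < mpow P t u v" using irr unfolding irreducible_chain_def by blast
  have "0 < \<pi> u * mpow P t u v" using \<open>0 < \<pi> u\<close> \<open>0 < mpow P t u v\<close> by simp
  also have "\<dots> \<le> (\<Sum>x\<in>UNIV. \<pi> x * mpow P t x v)"
    by (rule member_le_sum) (auto intro: mult_nonneg_nonneg \<pi>_nonneg mpow_nonneg[OF st])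
  also have "\<dots> = \<pi> v" by (rule stationary_mpow[OF assms(2)])
  finally show ?thesis .
qed

lemma pi_min_le: "pi_min \<pi> \<le> \<pi> v"
  unfolding pi_min_def by (rule Min_le) auto

lemma pi_min_pos:
  assumes "\<And>v. 0 < \<pi> v"
  shows "0 < pi_min \<pi>"
proof -
  have "pi_min \<pi> \<in> range \<pi>" unfolding pi_min_def by (rule Min_in) auto
  then show ?thesis using assms by auto
qed

text \<open>The contraction factor is \<open>1 - \<Sum>\<^sub>z min\<^sub>y (P\<^sup>m)\<^sub>y\<^sub>,\<^sub>z\<close> (Doeblin).\<close>
lemma dTV_mpow_contraction:
  assumes "stationary P \<pi>" "stochastic P" and pos: "\<And>x y. 0 < mpow P m x y"
  shows "\<exists>r<1. 0 \<le> r \<and> (\<forall>s x. dTV (mpow P (s + m) x) \<pi> \<le> r * dTV (mpow P s x) \<pi>)"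
proof -
  define c where "c z = Min (range (\<lambda>y. mpow P m y z))" for z
  have c_le: "c z \<le> mpow P m y z" for y z unfolding c_def by (rule Min_le) auto
  have "0 < c z" for z
  proof -
    have "c z \<in> range (\<lambda>y. mpow P m y z)" unfolding c_def by (rule Min_in) auto
    then show ?thesis using pos by auto
  qed
  then have "(1 - (\<Sum>z\<in>UNIV. c z)) < 1" using sum_pos[of UNIV c] by simp
  moreover have "0 \<le> 1 - (\<Sum>z\<in>UNIV. c z)"
    using sum_mono[of UNIV c "mpow P m undefined"] c_le mpow_row_sum[OF assms(2)] by simp
  moreover have "dTV (mpow P (s + m) x) \<pi> \<le> (1 - (\<Sum>z\<in>UNIV. c z)) * dTV (mpow P s x) \<pi>" for s x
  proof -
    have "(\<Sum>z\<in>UNIV. \<bar>mpow P (s + m) x z - \<pi> z\<bar>)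
        = (\<Sum>z\<in>UNIV. \<bar>\<Sum>y\<in>UNIV. (mpow P s x y - \<pi> y) * mpow P m y z\<bar>)"
      by (simp add: mpow_minus_stationary[OF assms(1)])
    also have "\<dots> \<le> (1 - (\<Sum>z\<in>UNIV. c z)) * (\<Sum>y\<in>UNIV. \<bar>mpow P s x y - \<pi> y\<bar>)"
      by (rule sum_abs_mult_le_Doeblin)
        (simp_all add: c_le mpow_row_sum[OF assms(2)] sum_mpow_minus_stationary[OF assms(1,2)])
    finally show ?thesis unfolding dTV_def by simp
  qed
  ultimately show ?thesis by blast
qed

text \<open>Without this, the \<open>LEAST\<close> in \<open>mixing_time\<close> would be an unspecified value.\<close>
lemma ergodic_dTV_le_quarter:
  assumes "ergodic P" "stationary P \<pi>"
  shows "\<exists>t. dTV (mpow P t x) \<pi> \<le> 1/4"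
proof -
  have st: "stochastic P" using assms(1) unfolding ergodic_def by auto
  obtain m where "\<And>x y. 0 < mpow P m x y" using ergodic_mpow_pos[OF assms(1)] by blast
  then obtain r where "r < 1" "0 \<le> r" and step: "\<And>s. dTV (mpow P (s + m) x) \<pi> \<le> r * dTV (mpow P s x) \<pi>"
    using dTV_mpow_contraction[OF assms(2) st] by blast
  have r_pow: "dTV (mpow P (k * m) x) \<pi> \<le> r ^ k" for k
  proof (induction k)
    case 0
    then show ?case using dTV_mpow_le_1[OF assms(2) st, of 0 x] by simp
  next
    case (Suc k)
    have "dTV (mpow P (Suc k * m) x) \<pi> \<le> r * dTV (mpow P (k * m) x) \<pi>"
      using step[of "k * m"] by (simp add: add.commute)
    also have "\<dots> \<le> r * r ^ k" using Suc \<open>0 \<le> r\<close> by (simp add: mult_left_mono)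
    finally show ?case by simp
  qed
  obtain k where "r ^ k < 1/4" using real_arch_pow_inv[OF _ \<open>r < 1\<close>, of "1/4"] by auto
  then show ?thesis using r_pow[of k] by (intro exI[of _ "k * m"]) simp
qed

lemma dTV_mpow_le_quarter:
  assumes "ergodic P" "stationary P \<pi>" "mixing_rate P \<pi> \<le> t"
  shows "dTV (mpow P t x) \<pi> \<le> 1/4"
proof -
  have st: "stochastic P" using assms(1) unfolding ergodic_def by auto
  define t\<^sub>x where "t\<^sub>x = (LEAST t. dTV (mpow P t x) \<pi> \<le> 1/4)"
  have "dTV (mpow P t\<^sub>x x) \<pi> \<le> 1/4"
    unfolding t\<^sub>x_def using ergodic_dTV_le_quarter[OF assms(1,2), of x] by (rule LeastI_ex)
  moreover have "t\<^sub>x \<le> mixing_rate P \<pi>"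
    unfolding mixing_rate_def mixing_time_def t\<^sub>x_def by (rule Max_ge) auto
  then have "dTV (mpow P t x) \<pi> \<le> dTV (mpow P t\<^sub>x x) \<pi>"
    using assms(3) by (intro dTV_mpow_antimono[OF assms(2) st]) simp
  ultimately show ?thesis by simp
qed

lemma dTV_mpow_halves:
  assumes "ergodic P" "stationary P \<pi>"
  shows "dTV (mpow P (t + mixing_rate P \<pi>) x) \<pi> \<le> dTV (mpow P t x) \<pi> / 2"
proof -
  have st: "stochastic P" using assms(1) unfolding ergodic_def by auto
  have "dTV (mpow P (t + mixing_rate P \<pi>) x) \<pi> \<le> 2 * dTV (mpow P t x) \<pi> * (1/4)"
    by (rule dTV_mpow_add_le[OF assms(2) st]) (rule dTV_mpow_le_quarter[OF assms], simp)
  then show ?thesis by simp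
qed

lemma sum_lessThan_add:
  fixes g :: "nat \<Rightarrow> 'a::comm_monoid_add"
  shows "(\<Sum>t<a + b. g t) = (\<Sum>t<a. g t) + (\<Sum>t<b. g (t + a))"
  by (induction b) (simp_all add: add.commute add.left_commute)

lemma sum_le_of_halving_le_quarter:
  fixes g :: "nat \<Rightarrow> real"
  assumes "0 < m" and quarter: "\<And>t. g t \<le> 1/4" and halve: "\<And>t. g (t + m) \<le> g t / 2"
  shows "(\<Sum>t<n. g t) \<le> real m / 2"
proof (induction n rule: less_induct)
  case (less n)
  show ?case
  proof (cases "n \<le> m")
    case True
    have "(\<Sum>t<n. g t) \<le> real n * (1/4)" using sum_bounded_above[of "{..<n}" g "1/4"] quarter by simp
    then show ?thesis using True by simp
  next
    case False
    then obtain k where n: "n = m + k" by (metis le_add_diff_inverse nle_le)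
    have "(\<Sum>t<n. g t) = (\<Sum>t<m. g t) + (\<Sum>t<k. g (t + m))"
      unfolding n by (rule sum_lessThan_add)
    also have "\<dots> \<le> real m * (1/4) + (\<Sum>t<k. g t / 2)"
    proof (rule add_mono)
      show "(\<Sum>t<m. g t) \<le> real m * (1/4)"
        using sum_bounded_above[of "{..<m}" g "1/4"] quarter by simp
      show "(\<Sum>t<k. g (t + m)) \<le> (\<Sum>t<k. g t / 2)" by (rule sum_mono) (rule halve)
    qed
    also have "\<dots> \<le> real m * (1/4) + (real m / 2) / 2"
      using less[of k] n \<open>0 < m\<close> by (simp add: sum_divide_distrib[symmetric])
    finally show ?thesis by simp
  qed
qed

lemma sum_le_of_halving:
  fixes f :: "nat \<Rightarrow> real"
  assumes nonneg: "\<And>t. 0 \<le> f t" and le_1: "\<And>t. f t \<le> 1"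
    and quarter: "\<And>t. m \<le> t \<Longrightarrow> f t \<le> 1/4" and halve: "\<And>t. f (t + m) \<le> f t / 2"
  shows "(\<Sum>t<T. f t) \<le> 3/2 * real m"
proof (cases "m = 0")
  case True
  then show ?thesis using halve nonneg by (simp add: order.antisym sum_nonpos)
next
  case False
  show ?thesis
  proof (cases "T \<le> m")
    case True
    then show ?thesis using sum_bounded_above[of "{..<T}" f 1] le_1 by simp
  next
    case False
    then obtain k where T: "T = m + k" by (metis le_add_diff_inverse nle_le)
    have "(\<Sum>t<T. f t) = (\<Sum>t<m. f t) + (\<Sum>t<k. f (t + m))" unfolding T by (rule sum_lessThan_add)
    also have "\<dots> \<le> real m * 1 + real m / 2"
    proof (rule add_mono)
      show "(\<Sum>t<m. f t) \<le> real m * 1" using sum_bounded_above[of "{..<m}" f 1] le_1 by simp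
      show "(\<Sum>t<k. f (t + m)) \<le> real m / 2"
      proof (rule sum_le_of_halving_le_quarter)
        show "0 < m" using \<open>m \<noteq> 0\<close> by simp
        show "\<And>t. f (t + m) \<le> 1/4" by (rule quarter) simp
        show "\<And>t. f (t + m + m) \<le> f (t + m) / 2" by (rule halve)
      qed
    qed
    finally show ?thesis by simp
  qed
qed

lemma sum_dTV_mpow_le_mixing_rate:
  assumes "ergodic P" "stationary P \<pi>"
  shows "(\<Sum>t<T. dTV (mpow P t x) \<pi>) \<le> 3/2 * real (mixing_rate P \<pi>)"
proof (rule sum_le_of_halving)
  have st: "stochastic P" using assms(1) unfolding ergodic_def by auto
  show "\<And>t. dTV (mpow P t x) \<pi> \<le> 1" by (rule dTV_mpow_le_1[OF assms(2) st])
  show "\<And>t. mixing_rate P \<pi> \<le> t \<Longrightarrow> dTV (mpow P t x) \<pi> \<le> 1/4"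
    by (rule dTV_mpow_le_quarter[OF assms])
  show "\<And>t. dTV (mpow P (t + mixing_rate P \<pi>) x) \<pi> \<le> dTV (mpow P t x) \<pi> / 2"
    by (rule dTV_mpow_halves[OF assms])
qed (rule dTV_nonneg)

section \<open>Billiard sequences\<close>

lemma Icnt_empty: "Icnt \<sigma> v u z z = 0"
  unfolding Icnt_def by simp

lemma Icnt_Suc:
  assumes "z \<le> i"
  shows "Icnt \<sigma> v u z (Suc i) = Icnt \<sigma> v u z i + (if \<sigma> v i = u then 1 else 0)"
proof -
  have "{j. z \<le> j \<and> j < Suc i \<and> \<sigma> v j = u}
      = {j. z \<le> j \<and> j < i \<and> \<sigma> v j = u} \<union> (if \<sigma> v i = u then {i} else {})"
    using assms by (auto simp: less_Suc_eq)
  moreover have "finite {j. z \<le> j \<and> j < i \<and> \<sigma> v j = u}" by (rule finite_subset[of _ "{..<i}"]) auto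
  ultimately show ?thesis unfolding Icnt_def by (auto simp: card_insert_if)
qed

lemma Icnt_split:
  assumes "z \<le> z'"
  shows "Icnt \<sigma> v u 0 z' = Icnt \<sigma> v u 0 z + Icnt \<sigma> v u z z'"
  using assms by (induction z' rule: dec_induct) (simp_all add: Icnt_empty Icnt_Suc)

lemma sum_Icnt:
  fixes \<sigma> :: "'v::finite \<Rightarrow> nat \<Rightarrow> 'v"
  assumes "z \<le> z'"
  shows "(\<Sum>u\<in>UNIV. Icnt \<sigma> v u z z') = z' - z"
  using assms
proof (induction z' rule: dec_induct)
  case (step n)
  have "(\<Sum>u\<in>UNIV. (if \<sigma> v n = u then 1 else 0)::nat) = 1" by simp
  then show ?case using step by (simp add: Icnt_Suc sum.distrib)
qed (simp add: Icnt_empty)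

lemma Icnt_outside_nbhd:
  assumes "functional_router P \<sigma>" "u \<notin> nbhd P v"
  shows "Icnt \<sigma> v u z z' = 0"
  using assms unfolding functional_router_def Icnt_def by auto

lemma nbhd_nonempty:
  assumes "stochastic P"
  shows "nbhd P v \<noteq> {}"
proof
  assume "nbhd P v = {}"
  then have "P v u = 0" for u using assms unfolding nbhd_def stochastic_def by (metis empty_iff mem_Collect_eq order_less_le)
  then show False using assms unfolding stochastic_def by (metis sum.neutral zero_neq_one)
qed

lemma outside_nbhd_zero:
  assumes "stochastic P" "u \<notin> nbhd P v"
  shows "P v u = 0"
  using assms unfolding stochastic_def nbhd_def by (metis mem_Collect_eq order_less_le)

lemma sum_nbhd:
  assumes "stochastic P"
  shows "(\<Sum>u\<in>nbhd P v. P v u) = 1"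
proof -
  have "(\<Sum>u\<in>nbhd P v. P v u) = (\<Sum>u\<in>UNIV. P v u)"
    by (rule sum.mono_neutral_left) (auto simp: outside_nbhd_zero[OF assms])
  then show ?thesis using assms unfolding stochastic_def by simp
qed

lemma card_nbhd_le_max_degree: "card (nbhd P v) \<le> max_degree P"
  unfolding max_degree_def by (rule Max_ge) auto

lemma max_degree_ge_1:
  assumes "stochastic P"
  shows "1 \<le> max_degree P"
proof -
  have "0 < card (nbhd P v)" using nbhd_nonempty[OF assms] by (simp add: card_gt_0_iff)
  then show ?thesis using card_nbhd_le_max_degree[of P v] by simp
qed

lemma billiard_ratio_le:
  assumes br: "billiard_router P \<sigma>" and "u \<in> nbhd P v" "u' \<in> nbhd P v"
  shows "real (Icnt \<sigma> v u 0 i) / P v u \<le> (real (Icnt \<sigma> v u' 0 i) + 1) / P v u'"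
  using assms(2,3)
proof (induction i arbitrary: u u')
  case 0
  then show ?case by (simp add: Icnt_empty nbhd_def)
next
  case (Suc i)
  define s where "s = \<sigma> v i"
  let ?r = "\<lambda>x. (real (Icnt \<sigma> v x 0 i) + 1) / P v x"
  have s: "s \<in> nbhd P v" using br unfolding billiard_router_def functional_router_def s_def by blast
  have s_min: "?r s \<le> ?r x" if "x \<in> nbhd P v" for x
    using br that unfolding billiard_router_def s_def by blast
  have count_s: "real (Icnt \<sigma> v s 0 (Suc i)) = real (Icnt \<sigma> v s 0 i) + 1"
    and count_other: "x \<noteq> s \<Longrightarrow> real (Icnt \<sigma> v x 0 (Suc i)) = real (Icnt \<sigma> v x 0 i)" for x
    unfolding s_def by (simp_all add: Icnt_Suc)
  have r_s: "?r s \<le> (real (Icnt \<sigma> v s 0 i) + 1 + 1) / P v s"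
    using s by (simp add: nbhd_def divide_right_mono)
  show ?case
  proof (cases "u = s"; cases "u' = s")
    assume "u = s" "u' = s"
    then show ?thesis using r_s by (simp add: count_s)
  next
    assume "u = s" "u' \<noteq> s"
    then show ?thesis using s_min[OF Suc.prems(2)] by (simp add: count_s count_other)
  next
    assume "u \<noteq> s" "u' = s"
    then show ?thesis using Suc.IH[OF Suc.prems(1) s] r_s by (simp add: count_s count_other)
  next
    assume "u \<noteq> s" "u' \<noteq> s"
    then show ?thesis using Suc.IH[OF Suc.prems] by (simp add: count_other)
  qed
qed

text \<open>\<open>\<theta>\<close> is the largest normalised count \<open>I\<^sub>v\<^sub>,\<^sub>u[0,i) / P\<^sub>v\<^sub>,\<^sub>u\<close>.\<close>
lemma billiard_common_scale:
  assumes br: "billiard_router P \<sigma>" and "stochastic P"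
  obtains \<theta> where "\<And>u. u \<in> nbhd P v \<Longrightarrow>
    \<theta> * P v u - 1 \<le> real (Icnt \<sigma> v u 0 i) \<and> real (Icnt \<sigma> v u 0 i) \<le> \<theta> * P v u"
proof -
  let ?ratio = "\<lambda>u. real (Icnt \<sigma> v u 0 i) / P v u"
  define \<theta> where "\<theta> = Max (?ratio ` nbhd P v)"
  have pos: "0 < P v u" if "u \<in> nbhd P v" for u using that unfolding nbhd_def by simp
  have "\<theta> \<in> ?ratio ` nbhd P v"
    unfolding \<theta>_def using nbhd_nonempty[OF assms(2)] by (intro Max_in) auto
  then obtain u\<^sub>0 where u\<^sub>0: "u\<^sub>0 \<in> nbhd P v" "\<theta> = ?ratio u\<^sub>0" by blast
  show ?thesis
  proof (rule that, rule conjI)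
    fix u assume u: "u \<in> nbhd P v"
    have "\<theta> \<le> (real (Icnt \<sigma> v u 0 i) + 1) / P v u"
      unfolding u\<^sub>0(2) by (rule billiard_ratio_le[OF br u\<^sub>0(1) u])
    then show "\<theta> * P v u - 1 \<le> real (Icnt \<sigma> v u 0 i)" using pos[OF u] by (simp add: le_divide_eq)
    have "?ratio u \<le> \<theta>" unfolding \<theta>_def using u by (intro Max_ge) auto
    then show "real (Icnt \<sigma> v u 0 i) \<le> \<theta> * P v u" using pos[OF u] by (simp add: divide_le_eq)
  qed
qed

text \<open>\<open>D u - (\<Sum> D) p\<^sub>u = (1 - p\<^sub>u) (D u - L p\<^sub>u) - p\<^sub>u (\<Sum>\<^sub>x\<^sub>\<noteq>\<^sub>u D x - L (1 - p\<^sub>u))\<close> is a convex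
  combination of the error at \<open>u\<close> and of the total error elsewhere.\<close>
lemma discrepancy_of_common_scale:
  fixes D p :: "'a \<Rightarrow> real"
  assumes fin: "finite N" and u: "u \<in> N" and close: "\<And>x. x \<in> N \<Longrightarrow> \<bar>D x - L * p x\<bar> \<le> 1"
    and p_nonneg: "\<And>x. x \<in> N \<Longrightarrow> 0 \<le> p x" and p_sum: "(\<Sum>x\<in>N. p x) = 1"
  shows "\<bar>D u - (\<Sum>x\<in>N. D x) * p u\<bar> \<le> 1 + (real (card N) - 2) * p u"
proof -
  define R where "R = (\<Sum>x\<in>N - {u}. D x)"
  have sum_D: "(\<Sum>x\<in>N. D x) = D u + R" unfolding R_def using fin u by (simp add: sum.remove)
  have sum_p: "(\<Sum>x\<in>N - {u}. p x) = 1 - p u" using fin u p_sum by (simp add: sum.remove)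
  have "0 \<le> p u" "p u \<le> 1"
    using p_nonneg u sum_p sum_nonneg[of "N - {u}" p] p_nonneg by auto
  have "\<bar>R - L * (1 - p u)\<bar> = \<bar>\<Sum>x\<in>N - {u}. (D x - L * p x)\<bar>"
    unfolding R_def sum_p[symmetric] by (simp add: sum_subtractf sum_distrib_left)
  also have "\<dots> \<le> (\<Sum>x\<in>N - {u}. 1)" by (rule order_trans[OF sum_abs sum_mono]) (simp add: close)
  also have "\<dots> = real (card N) - 1"
    using fin u card_gt_0_iff[of N] by (auto simp: card_Diff_singleton of_nat_diff)
  finally have R_close: "\<bar>R - L * (1 - p u)\<bar> \<le> real (card N) - 1" .
  have "D u - (D u + R) * p u = (1 - p u) * (D u - L * p u) - p u * (R - L * (1 - p u))"
    by (simp add: algebra_simps)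
  also have "\<bar>\<dots>\<bar> \<le> (1 - p u) * \<bar>D u - L * p u\<bar> + p u * \<bar>R - L * (1 - p u)\<bar>"
    by (rule order_trans[OF abs_triangle_ineq4]) (simp add: abs_mult \<open>0 \<le> p u\<close> \<open>p u \<le> 1\<close>)
  also have "\<dots> \<le> (1 - p u) * 1 + p u * (real (card N) - 1)"
    using \<open>0 \<le> p u\<close> \<open>p u \<le> 1\<close> close[OF u] R_close by (intro add_mono mult_left_mono) auto
  finally show ?thesis unfolding sum_D by (simp add: algebra_simps)
qed

theorem billiard_discrepancy:
  assumes br: "billiard_router P \<sigma>" and st: "stochastic P" and "z \<le> z'" and u: "u \<in> nbhd P v"
  shows "\<bar>real (Icnt \<sigma> v u z z') - real (z' - z) * P v u\<bar> \<le> 1 + (real (card (nbhd P v)) - 2) * P v u"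
proof -
  have fr: "functional_router P \<sigma>" using br unfolding billiard_router_def by simp
  obtain \<theta> where \<theta>: "\<And>u. u \<in> nbhd P v \<Longrightarrow>
      \<theta> * P v u - 1 \<le> real (Icnt \<sigma> v u 0 z) \<and> real (Icnt \<sigma> v u 0 z) \<le> \<theta> * P v u"
    using billiard_common_scale[OF br st] by blast
  obtain \<theta>' where \<theta>': "\<And>u. u \<in> nbhd P v \<Longrightarrow>
      \<theta>' * P v u - 1 \<le> real (Icnt \<sigma> v u 0 z') \<and> real (Icnt \<sigma> v u 0 z') \<le> \<theta>' * P v u"
    using billiard_common_scale[OF br st] by blast
  define D where "D x = real (Icnt \<sigma> v x z z')" for x
  have D: "D x = real (Icnt \<sigma> v x 0 z') - real (Icnt \<sigma> v x 0 z)" for x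
    unfolding D_def using Icnt_split[OF \<open>z \<le> z'\<close>, of \<sigma> v x] by simp
  have "\<bar>D x - (\<theta>' - \<theta>) * P v x\<bar> \<le> 1" if "x \<in> nbhd P v" for x
    using \<theta>[OF that] \<theta>'[OF that] unfolding D by (simp add: abs_le_iff left_diff_distrib)
  moreover have "(\<Sum>x\<in>nbhd P v. D x) = real (z' - z)"
  proof -
    have "(\<Sum>x\<in>nbhd P v. D x) = (\<Sum>x\<in>UNIV. D x)"
      by (rule sum.mono_neutral_left) (auto simp: D_def Icnt_outside_nbhd[OF fr])
    then show ?thesis unfolding D_def of_nat_sum[symmetric] sum_Icnt[OF \<open>z \<le> z'\<close>] .
  qed
  ultimately show ?thesis
    using discrepancy_of_common_scale[of "nbhd P v" u D "\<theta>' - \<theta>" "P v"] u st sum_nbhd[OF st]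
    unfolding D_def stochastic_def by simp
qed

section \<open>Deviation of the router model from the Markov chain\<close>

text \<open>\<open>chips_sent \<sigma> \<chi>0 t v\<close> is \<open>\<Sum>\<^sub>s\<^sub><\<^sub>t \<chi>\<^sup>(\<^sup>s\<^sup>)\<^sub>v\<close>, so that \<open>Z\<^sup>(\<^sup>t\<^sup>)\<^sub>v\<^sub>,\<^sub>u\<close> counts the positions
  \<open>chips_sent \<sigma> \<chi>0 t v \<le> j < chips_sent \<sigma> \<chi>0 (Suc t) v\<close> with \<open>\<sigma> v j = u\<close>.\<close>
definition chips_sent :: "('v::finite \<Rightarrow> nat \<Rightarrow> 'v) \<Rightarrow> ('v \<Rightarrow> nat) \<Rightarrow> nat \<Rightarrow> 'v \<Rightarrow> nat" where
  "chips_sent \<sigma> \<chi>0 t = snd (router_state \<sigma> \<chi>0 t)"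

definition routing_error ::
    "('v::finite \<Rightarrow> 'v \<Rightarrow> real) \<Rightarrow> ('v \<Rightarrow> nat \<Rightarrow> 'v) \<Rightarrow> ('v \<Rightarrow> nat) \<Rightarrow> nat \<Rightarrow> 'v \<Rightarrow> 'v \<Rightarrow> real" where
  "routing_error P \<sigma> \<chi>0 t v u =
     real (Icnt \<sigma> v u (chips_sent \<sigma> \<chi>0 t v) (chips_sent \<sigma> \<chi>0 t v + chi \<sigma> \<chi>0 t v))
     - real (chi \<sigma> \<chi>0 t v) * P v u"

definition inflow_error ::
    "('v::finite \<Rightarrow> 'v \<Rightarrow> real) \<Rightarrow> ('v \<Rightarrow> nat \<Rightarrow> 'v) \<Rightarrow> ('v \<Rightarrow> nat) \<Rightarrow> nat \<Rightarrow> 'v \<Rightarrow> real" where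
  "inflow_error P \<sigma> \<chi>0 t u = (\<Sum>v\<in>UNIV. routing_error P \<sigma> \<chi>0 t v u)"

definition billiard_bound :: "('v::finite \<Rightarrow> 'v \<Rightarrow> real) \<Rightarrow> 'v \<Rightarrow> 'v \<Rightarrow> real" where
  "billiard_bound P v u = (if u \<in> nbhd P v then 1 + (real (card (nbhd P v)) - 2) * P v u else 0)"

lemma chi_0: "chi \<sigma> \<chi>0 0 = \<chi>0"
  by (simp add: chi_def)

lemma chi_Suc:
  "real (chi \<sigma> \<chi>0 (Suc t) u) = (\<Sum>v\<in>UNIV. real (chi \<sigma> \<chi>0 t v) * P v u) + inflow_error P \<sigma> \<chi>0 t u"
proof -
  obtain c S where "router_state \<sigma> \<chi>0 t = (c, S)" by fastforce
  then show ?thesis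
    by (simp add: inflow_error_def routing_error_def chi_def chips_sent_def sum_subtractf)
qed

lemma mu_0: "mu P \<chi>0 0 w = real (\<chi>0 w)"
  unfolding mu_def by (simp add: if_distrib cong: if_cong)

lemma mu_Suc: "mu P \<chi>0 (Suc t) w = (\<Sum>v\<in>UNIV. mu P \<chi>0 t v * P v w)"
proof -
  have "mu P \<chi>0 (Suc t) w = (\<Sum>u\<in>UNIV. \<Sum>v\<in>UNIV. real (\<chi>0 u) * mpow P t u v * P v w)"
    unfolding mu_def by (simp add: sum_distrib_left mult.assoc)
  also have "\<dots> = (\<Sum>v\<in>UNIV. \<Sum>u\<in>UNIV. real (\<chi>0 u) * mpow P t u v * P v w)" by (rule sum.swap)
  finally show ?thesis unfolding mu_def by (simp add: sum_distrib_right)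
qed

lemma chi_minus_mu:
  "real (chi \<sigma> \<chi>0 T w) - mu P \<chi>0 T w
     = (\<Sum>s<T. \<Sum>u\<in>UNIV. inflow_error P \<sigma> \<chi>0 s u * mpow P (T - Suc s) u w)"
proof (induction T arbitrary: w)
  case 0
  then show ?case by (simp add: chi_0 mu_0)
next
  case (Suc T)
  let ?E = "inflow_error P \<sigma> \<chi>0"
  have "real (chi \<sigma> \<chi>0 (Suc T) w) - mu P \<chi>0 (Suc T) w
      = (\<Sum>y\<in>UNIV. (real (chi \<sigma> \<chi>0 T y) - mu P \<chi>0 T y) * P y w) + ?E T w"
    by (simp add: chi_Suc mu_Suc left_diff_distrib sum_subtractf)
  also have "\<dots> = (\<Sum>y\<in>UNIV. \<Sum>s<T. \<Sum>u\<in>UNIV. ?E s u * mpow P (T - Suc s) u y * P y w) + ?E T w"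
    by (simp add: Suc sum_distrib_right)
  also have "(\<Sum>y\<in>UNIV. \<Sum>s<T. \<Sum>u\<in>UNIV. ?E s u * mpow P (T - Suc s) u y * P y w)
      = (\<Sum>s<T. \<Sum>u\<in>UNIV. \<Sum>y\<in>UNIV. ?E s u * mpow P (T - Suc s) u y * P y w)"
    by (subst sum.swap) (rule sum.cong[OF refl], rule sum.swap)
  also have "\<dots> = (\<Sum>s<T. \<Sum>u\<in>UNIV. ?E s u * mpow P (Suc (T - Suc s)) u w)"
    by (simp add: sum_distrib_left mult.assoc)
  also have "\<dots> = (\<Sum>s<T. \<Sum>u\<in>UNIV. ?E s u * mpow P (Suc T - Suc s) u w)"
    by (rule sum.cong[OF refl]) (simp add: Suc_diff_Suc)
  also have "?E T w = (\<Sum>u\<in>UNIV. ?E T u * mpow P (Suc T - Suc T) u w)"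
    by (simp add: if_distrib cong: if_cong)
  finally show ?case by simp
qed

lemma sum_inflow_error:
  assumes "stochastic P"
  shows "(\<Sum>u\<in>UNIV. inflow_error P \<sigma> \<chi>0 t u) = 0"
proof -
  have "(\<Sum>u\<in>UNIV. routing_error P \<sigma> \<chi>0 t v u) = 0" for v
  proof -
    let ?S = "chips_sent \<sigma> \<chi>0 t v" and ?c = "chi \<sigma> \<chi>0 t v"
    have "(\<Sum>u\<in>UNIV. real (Icnt \<sigma> v u ?S (?S + ?c))) = real ?c"
      unfolding of_nat_sum[symmetric] by (simp add: sum_Icnt)
    moreover have "(\<Sum>u\<in>UNIV. real ?c * P v u) = real ?c"
      using assms by (simp add: sum_distrib_left[symmetric] stochastic_def)
    ultimately show ?thesis unfolding routing_error_def sum_subtractf by simp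
  qed
  then show ?thesis unfolding inflow_error_def by (subst sum.swap) simp
qed

lemma abs_routing_error_le:
  assumes br: "billiard_router P \<sigma>" and st: "stochastic P"
  shows "\<bar>routing_error P \<sigma> \<chi>0 t v u\<bar> \<le> billiard_bound P v u"
proof (cases "u \<in> nbhd P v")
  case True
  then show ?thesis
    using billiard_discrepancy[OF br st le_add1 True]
    unfolding routing_error_def billiard_bound_def by simp
next
  case False
  have "functional_router P \<sigma>" using br unfolding billiard_router_def by simp
  then show ?thesis using False
    by (simp add: routing_error_def billiard_bound_def Icnt_outside_nbhd outside_nbhd_zero[OF st])
qed

lemma billiard_bound_max_degree_le_1:
  assumes "stochastic P" "max_degree P \<le> 1"
  shows "billiard_bound P v u = 0"
proof (cases "u \<in> nbhd P v")
  case True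
  then have "card (nbhd P v) = 1"
    using card_nbhd_le_max_degree[of P v] assms(2) by (auto simp: card_eq_0_iff le_Suc_eq)
  then have "nbhd P v = {u}" using True by (auto simp: card_1_singleton_iff)
  then have "P v u = 1" using sum_nbhd[OF assms(1), of v] by simp
  then show ?thesis using \<open>card (nbhd P v) = 1\<close> True unfolding billiard_bound_def by simp
qed (simp add: billiard_bound_def)

lemma reversible_pos_iff:
  assumes "reversible P \<pi>" "\<And>x. 0 < \<pi> x"
  shows "0 < P v u \<longleftrightarrow> 0 < P u v"
proof -
  have "\<pi> u * P u v = \<pi> v * P v u" using assms(1) unfolding reversible_def by blast
  then show ?thesis using assms(2)[of u] assms(2)[of v] by (metis mult_pos_pos zero_less_mult_pos)
qed

text \<open>Detailed balance \<open>P\<^sub>v\<^sub>,\<^sub>u / \<pi>\<^sub>u = P\<^sub>u\<^sub>,\<^sub>v / \<pi>\<^sub>v\<close> turns the billiard bounds on the edges into \<open>u\<close> into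
  a sum over the edges out of \<open>u\<close>.\<close>
lemma billiard_bound_le:
  assumes rev: "reversible P \<pi>" and \<pi>_pos: "\<And>x. 0 < \<pi> x" and st: "stochastic P"
    and D: "2 \<le> real (max_degree P)"
  shows "billiard_bound P v u
    \<le> \<pi> u / pi_min \<pi> * ((if 0 < P u v then 1 else 0) + (real (max_degree P) - 2) * P u v)"
proof (cases "u \<in> nbhd P v")
  case True
  let ?D = "real (max_degree P)" and ?m = "pi_min \<pi>"
  have "0 < P v u" using True unfolding nbhd_def by simp
  then have "0 < P u v" using reversible_pos_iff[OF rev \<pi>_pos] by simp
  have "0 < ?m" by (rule pi_min_pos[of \<pi>, OF \<pi>_pos])
  have "P v u = \<pi> u * (P u v / \<pi> v)"
    using rev \<pi>_pos[of v] unfolding reversible_def by (simp add: field_simps)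
  also have "\<dots> \<le> \<pi> u * (P u v / ?m)"
    using \<pi>_pos[of v] \<open>0 < P u v\<close> \<open>0 < ?m\<close> pi_min_le[of \<pi> v] less_imp_le[OF \<pi>_pos[of u]]
    by (intro mult_left_mono) (auto simp: frac_le)
  finally have P_vu: "P v u \<le> \<pi> u / ?m * P u v" by simp
  have "billiard_bound P v u \<le> 1 + (?D - 2) * P v u"
    using True \<open>0 < P v u\<close> card_nbhd_le_max_degree[of P v]
    unfolding billiard_bound_def by (simp add: mult_right_mono)
  also have "\<dots> \<le> \<pi> u / ?m + (?D - 2) * (\<pi> u / ?m * P u v)"
    using P_vu D \<open>0 < ?m\<close> pi_min_le[of \<pi> u] by (intro add_mono mult_left_mono) simp_all
  also have "\<dots> = \<pi> u / ?m * (1 + (?D - 2) * P u v)" by (simp add: distrib_left mult_ac)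
  finally show ?thesis using \<open>0 < P u v\<close> by simp
next
  case False
  have "0 \<le> P u v" using st unfolding stochastic_def by blast
  then show ?thesis
    using False D \<pi>_pos[of u] pi_min_pos[of \<pi>, OF \<pi>_pos] unfolding billiard_bound_def by simp
qed

lemma abs_inflow_error_le:
  assumes br: "billiard_router P \<sigma>" and rev: "reversible P \<pi>" and \<pi>_pos: "\<And>x. 0 < \<pi> x"
    and st: "stochastic P" and D: "2 \<le> real (max_degree P)"
  shows "\<bar>inflow_error P \<sigma> \<chi>0 t u\<bar> \<le> \<pi> u * ((2 * real (max_degree P) - 2) / pi_min \<pi>)"
proof -
  let ?D = "real (max_degree P)"
  have "\<bar>inflow_error P \<sigma> \<chi>0 t u\<bar> \<le> (\<Sum>v\<in>UNIV. billiard_bound P v u)"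
    unfolding inflow_error_def by (rule order_trans[OF sum_abs sum_mono]) (rule abs_routing_error_le[OF br st])
  also have "\<dots> \<le> (\<Sum>v\<in>UNIV. \<pi> u / pi_min \<pi> * ((if 0 < P u v then 1 else 0) + (?D - 2) * P u v))"
    by (rule sum_mono) (rule billiard_bound_le[OF rev \<pi>_pos st D])
  also have "\<dots> = \<pi> u / pi_min \<pi> * (\<Sum>v\<in>UNIV. (if 0 < P u v then 1 else 0) + (?D - 2) * P u v)"
    by (rule sum_distrib_left[symmetric])
  also have "(\<Sum>v\<in>UNIV. (if 0 < P u v then 1 else 0) + (?D - 2) * P u v)
      = (\<Sum>v\<in>UNIV. if 0 < P u v then 1 else 0) + (?D - 2) * (\<Sum>v\<in>UNIV. P u v)"
    by (simp add: sum.distrib sum_distrib_left)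
  also have "(\<Sum>v\<in>UNIV. if 0 < P u v then 1 else 0) = (\<Sum>v\<in>nbhd P u. 1::real)"
    unfolding nbhd_def by (simp add: sum.If_cases)
  also have "(\<Sum>v\<in>UNIV. P u v) = 1" using st unfolding stochastic_def by blast
  also have "\<pi> u / pi_min \<pi> * ((\<Sum>v\<in>nbhd P u. 1) + (?D - 2) * 1) \<le> \<pi> u / pi_min \<pi> * (2 * ?D - 2)"
    using card_nbhd_le_max_degree[of P u] \<pi>_pos[of u] pi_min_pos[of \<pi>, OF \<pi>_pos]
    by (intro mult_left_mono) simp_all
  finally show ?thesis by simp
qed

text \<open>The key use of reversibility: \<open>P\<^sup>k\<^sub>u\<^sub>,\<^sub>w - \<pi>\<^sub>w = \<pi>\<^sub>w (P\<^sup>k\<^sub>w\<^sub>,\<^sub>u - \<pi>\<^sub>u) / \<pi>\<^sub>u\<close>, so propagating a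
  zero-sum error to \<open>w\<close> is controlled by the distance of the chain started at \<open>w\<close>.\<close>
lemma reversible_propagated_error_le:
  assumes "stationary P \<pi>" "reversible P \<pi>" and \<pi>_pos: "\<And>x. 0 < \<pi> x"
    and e_sum: "(\<Sum>u\<in>UNIV. e u) = 0" and e_le: "\<And>u. \<bar>e u\<bar> \<le> \<pi> u * B"
  shows "\<bar>\<Sum>u\<in>UNIV. e u * mpow P k u w\<bar> \<le> 2 * B * \<pi> w * dTV (mpow P k w) \<pi>"
proof -
  have "(\<Sum>u\<in>UNIV. e u * mpow P k u w) = (\<Sum>u\<in>UNIV. e u * (mpow P k u w - \<pi> w))"
    using e_sum by (simp add: right_diff_distrib sum_subtractf sum_distrib_right[symmetric])
  also have "\<dots> = (\<Sum>u\<in>UNIV. e u / \<pi> u * \<pi> w * (mpow P k w u - \<pi> u))"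
  proof (rule sum.cong[OF refl])
    fix u
    have "e u / \<pi> u * \<pi> w * (mpow P k w u - \<pi> u) = e u / \<pi> u * (\<pi> w * mpow P k w u - \<pi> w * \<pi> u)"
      by (simp only: mult.assoc right_diff_distrib)
    also have "\<dots> = e u / \<pi> u * (\<pi> u * (mpow P k u w - \<pi> w))"
      by (simp only: reversible_mpow[OF assms(2), of w k u] right_diff_distrib mult.commute[of "\<pi> w" "\<pi> u"])
    also have "\<dots> = e u * (mpow P k u w - \<pi> w)" using \<pi>_pos[of u] by simp
    finally show "e u * (mpow P k u w - \<pi> w) = e u / \<pi> u * \<pi> w * (mpow P k w u - \<pi> u)" ..
  qed
  finally have "\<bar>\<Sum>u\<in>UNIV. e u * mpow P k u w\<bar> = \<bar>\<Sum>u\<in>UNIV. e u / \<pi> u * \<pi> w * (mpow P k w u - \<pi> u)\<bar>"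
    by simp
  also have "\<dots> \<le> (\<Sum>u\<in>UNIV. \<bar>e u / \<pi> u * \<pi> w * (mpow P k w u - \<pi> u)\<bar>)"
    by (rule sum_abs)
  also have "\<dots> = (\<Sum>u\<in>UNIV. \<bar>e u / \<pi> u\<bar> * (\<pi> w * \<bar>mpow P k w u - \<pi> u\<bar>))"
    using \<pi>_pos[of w] by (simp only: abs_mult mult.assoc abs_of_pos)
  also have "\<dots> \<le> (\<Sum>u\<in>UNIV. B * (\<pi> w * \<bar>mpow P k w u - \<pi> u\<bar>))"
  proof (intro sum_mono mult_right_mono)
    fix u
    show "\<bar>e u / \<pi> u\<bar> \<le> B"
      using e_le[of u] \<pi>_pos[of u] by (simp add: pos_divide_le_eq mult.commute)
    show "0 \<le> \<pi> w * \<bar>mpow P k w u - \<pi> u\<bar>" using \<pi>_pos[of w] by simp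
  qed
  also have "\<dots> = 2 * B * \<pi> w * dTV (mpow P k w) \<pi>"
    unfolding dTV_def by (simp add: sum_distrib_left)
  finally show ?thesis .
qed

lemma chi_minus_mu_le:
  assumes erg: "ergodic P" and stat: "stationary P \<pi>" and rev: "reversible P \<pi>"
    and br: "billiard_router P \<sigma>" and D: "2 \<le> real (max_degree P)"
  shows "\<bar>real (chi \<sigma> \<chi>0 T w) - mu P \<chi>0 T w\<bar>
    \<le> 6 * \<pi> w / pi_min \<pi> * real (mixing_rate P \<pi>) * (real (max_degree P) - 1)"
proof -
  have st: "stochastic P" using erg unfolding ergodic_def by simp
  have \<pi>_pos: "\<And>x. 0 < \<pi> x" by (rule stationary_pos[OF erg stat])
  define B where "B = (2 * real (max_degree P) - 2) / pi_min \<pi>"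
  have "0 \<le> B" unfolding B_def using D pi_min_pos[of \<pi>, OF \<pi>_pos] by simp
  have "\<bar>real (chi \<sigma> \<chi>0 T w) - mu P \<chi>0 T w\<bar>
      \<le> (\<Sum>s<T. \<bar>\<Sum>u\<in>UNIV. inflow_error P \<sigma> \<chi>0 s u * mpow P (T - Suc s) u w\<bar>)"
    unfolding chi_minus_mu by (rule sum_abs)
  also have "\<dots> \<le> (\<Sum>s<T. 2 * B * \<pi> w * dTV (mpow P (T - Suc s) w) \<pi>)"
    using sum_inflow_error[OF st] abs_inflow_error_le[OF br rev \<pi>_pos st D]
    by (intro sum_mono reversible_propagated_error_le[OF stat rev \<pi>_pos]) (simp_all add: B_def)
  also have "\<dots> = (\<Sum>t<T. 2 * B * \<pi> w * dTV (mpow P t w) \<pi>)"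
    by (rule sum.nat_diff_reindex)
  also have "\<dots> = 2 * B * \<pi> w * (\<Sum>t<T. dTV (mpow P t w) \<pi>)"
    by (simp add: sum_distrib_left)
  also have "\<dots> \<le> 2 * B * \<pi> w * (3/2 * real (mixing_rate P \<pi>))"
    using \<open>0 \<le> B\<close> \<pi>_pos[of w] sum_dTV_mpow_le_mixing_rate[OF erg stat]
    by (intro mult_left_mono) simp_all
  also have "\<dots> = 6 * \<pi> w / pi_min \<pi> * real (mixing_rate P \<pi>) * (real (max_degree P) - 1)"
    using pi_min_pos[of \<pi>, OF \<pi>_pos] unfolding B_def by (simp add: field_simps)
  finally show ?thesis .
qed

lemma chi_eq_mu_max_degree_le_1:
  assumes "billiard_router P \<sigma>" "stochastic P" "max_degree P \<le> 1"
  shows "real (chi \<sigma> \<chi>0 T w) = mu P \<chi>0 T w"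
proof -
  have "routing_error P \<sigma> \<chi>0 s v u = 0" for s v u
    using abs_routing_error_le[OF assms(1,2), of \<chi>0 s v u] billiard_bound_max_degree_le_1[OF assms(2,3), of v u]
    by simp
  then show ?thesis using chi_minus_mu[of \<sigma> \<chi>0 T w P] by (simp add: inflow_error_def)
qed

theorem theorem5p4:
  fixes P :: "'v::finite \<Rightarrow> 'v \<Rightarrow> real" and \<pi> :: "'v \<Rightarrow> real"
    and \<sigma> :: "'v \<Rightarrow> nat \<Rightarrow> 'v" and \<chi>0 :: "'v \<Rightarrow> nat"
  assumes "ergodic P" and "stationary P \<pi>" and "reversible P \<pi>"
    and "billiard_router P \<sigma>"
  shows "\<forall>w T. \<bar>real (chi \<sigma> \<chi>0 T w) - mu P \<chi>0 T w\<bar>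
           \<le> 6 * \<pi> w / pi_min \<pi> * real (mixing_rate P \<pi>) * (real (max_degree P) - 1)"
proof (intro allI)
  fix w T
  have st: "stochastic P" using assms(1) unfolding ergodic_def by simp
  show "\<bar>real (chi \<sigma> \<chi>0 T w) - mu P \<chi>0 T w\<bar>
      \<le> 6 * \<pi> w / pi_min \<pi> * real (mixing_rate P \<pi>) * (real (max_degree P) - 1)"
  proof (cases "max_degree P \<le> 1")
    case True
    then have "real (max_degree P) = 1" using max_degree_ge_1[OF st] by simp
    then show ?thesis using chi_eq_mu_max_degree_le_1[OF assms(4) st True] by simp
  next
    case False
    then show ?thesis by (intro chi_minus_mu_le[OF assms]) simp
  qed
qed

end
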